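(* Let $n \ge 2$ and let $\vdash$ be derivability in any proof system $\mathcal{S}$ over located sequents (for truth-values $v_1,\dots,v_n$) whose object language contains the unary operators $N_1,\dots,N_n$ and which contains the structural rules listed in the context (initial sequents, shifting, coordination, weakening, cut), possibly together with further rules. Suppose the empty located sequent ${} : {}$ is not derivable in $\mathcal{S}$. If $v_j$ and $v_k$ ($1\le j,k\le n$) are both falsities (in the sense defined in the context), then $j=k$. Equivalently: if there are two falsities $v_j,v_k$ with $j\ne k$, then the empty sequent ${}:{}$ is derivable in $\mathcal{S}$.
   Context: Fix $n \ge 2$ and truth-values $\mathcal{V}=\{v_1,\dots,v_n\}$. A located formula is a pair $(\varphi,k)$ with $\varphi$ an object-language formula and $k\in\{1,\dots,n\}$ (intended meaning: $\varphi$ has value $v_k$). A located sequent is $\Gamma : \Delta$ with $\Gamma,\Delta$ finite (possibly empty) sets of located formulas; "$\Gamma:\Delta,(\varphi,i)$" denotes $\Gamma : \Delta\cup\{(\varphi,i)\}$, and "$\Gamma:\Delta,\{(\varphi,m)\mid m\neq i\}$" denotes $\Gamma:\Delta\cup\{(\varphi,m)\mid 1\le m\le n,\ m\ne i\}$. The proof system contains at least the following rules, for all finite $\Gamma,\Delta,\Gamma',\Delta'$, formulas $\varphi$ and indices: (initial) $\Gamma,(\varphi,i) : \Delta,(\varphi,i)$ is derivable for every $1\le i\le n$; (shift right $\overrightarrow{s}_i$) from $\Gamma,(\varphi,i):\Delta$ infer $\Gamma:\Delta,\{(\varphi,m)\mid m\ne i\}$; (shift left $\overleftarrow{s}_{i,j}$,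 $j\ne i$) from $\Gamma:\Delta,(\varphi,i)$ infer $\Gamma,(\varphi,j):\Delta$; (coordination $c_{i,j}$, $i\ne j$) from $\Gamma:\Delta,(\varphi,i)$ and $\Gamma:\Delta,(\varphi,j)$ infer $\Gamma:\Delta$; (weakening) from $\Gamma:\Delta$ infer $\Gamma\cup\Gamma':\Delta\cup\Delta'$; (cut) from $\Gamma:\Delta,(\varphi,i)$ and $\Gamma,(\varphi,i):\Delta$ infer $\Gamma:\Delta$. Definition (falsity): $v_j$ is a falsity iff for every $1\le i\le n$, every formula $\varphi$ and all finite $\Gamma,\Delta$: the sequent $\Gamma:\Delta,(N_i\varphi,j)$ is derivable iff the sequent $\Gamma:\Delta,(\varphi,i)$ is derivable. *)

theory Defs
  imports Main
begin

text \<open>Located formulas are pairs (phi, k) of an object formula of type 'f and an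
index k in {1..n}. A located sequent Gamma : Delta is a pair of finite sets of
located formulas. Derivability in the proof system S is an abstract predicate
D :: located set => located set => bool (D Gamma Delta means Gamma : Delta is derivable).\<close>

type_synonym 'f located = "'f \<times> nat"

definition located_set :: "nat \<Rightarrow> 'f located set \<Rightarrow> bool" where
  "located_set n A \<longleftrightarrow> finite A \<and> (\<forall>p\<in>A. 1 \<le> snd p \<and> snd p \<le> n)"

definition structural :: "nat \<Rightarrow> ('f located set \<Rightarrow> 'f located set \<Rightarrow> bool) \<Rightarrow> bool" where
  "structural n D \<longleftrightarrow>
     (\<forall>\<Gamma> \<Delta> \<phi> i. located_set n \<Gamma> \<longrightarrow> located_set n \<Delta> \<longrightarrow> 1 \<le> i \<longrightarrow> i \<le> n \<longrightarrow>
        D (insert (\<phi>, i) \<Gamma>) (insert (\<phi>, i) \<Delta>))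
   \<and> (\<forall>\<Gamma> \<Delta> \<phi> i. located_set n \<Gamma> \<longrightarrow> located_set n \<Delta> \<longrightarrow> 1 \<le> i \<longrightarrow> i \<le> n \<longrightarrow>
        D (insert (\<phi>, i) \<Gamma>) \<Delta> \<longrightarrow>
        D \<Gamma> (\<Delta> \<union> {(\<phi>, m) | m. 1 \<le> m \<and> m \<le> n \<and> m \<noteq> i}))
   \<and> (\<forall>\<Gamma> \<Delta> \<phi> i j. located_set n \<Gamma> \<longrightarrow> located_set n \<Delta> \<longrightarrow> 1 \<le> i \<longrightarrow> i \<le> n \<longrightarrow>
        1 \<le> j \<longrightarrow> j \<le> n \<longrightarrow> j \<noteq> i \<longrightarrow>
        D \<Gamma> (insert (\<phi>, i) \<Delta>) \<longrightarrow> D (insert (\<phi>, j) \<Gamma>) \<Delta>)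
   \<and> (\<forall>\<Gamma> \<Delta> \<phi> i j. located_set n \<Gamma> \<longrightarrow> located_set n \<Delta> \<longrightarrow> 1 \<le> i \<longrightarrow> i \<le> n \<longrightarrow>
        1 \<le> j \<longrightarrow> j \<le> n \<longrightarrow> i \<noteq> j \<longrightarrow>
        D \<Gamma> (insert (\<phi>, i) \<Delta>) \<longrightarrow> D \<Gamma> (insert (\<phi>, j) \<Delta>) \<longrightarrow> D \<Gamma> \<Delta>)
   \<and> (\<forall>\<Gamma> \<Delta> \<Gamma>' \<Delta>'. located_set n \<Gamma> \<longrightarrow> located_set n \<Delta> \<longrightarrow>
        located_set n \<Gamma>' \<longrightarrow> located_set n \<Delta>' \<longrightarrow>
        D \<Gamma> \<Delta> \<longrightarrow> D (\<Gamma> \<union> \<Gamma>') (\<Delta> \<union> \<Delta>'))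
   \<and> (\<forall>\<Gamma> \<Delta> \<phi> i. located_set n \<Gamma> \<longrightarrow> located_set n \<Delta> \<longrightarrow> 1 \<le> i \<longrightarrow> i \<le> n \<longrightarrow>
        D \<Gamma> (insert (\<phi>, i) \<Delta>) \<longrightarrow> D (insert (\<phi>, i) \<Gamma>) \<Delta> \<longrightarrow> D \<Gamma> \<Delta>)"

definition falsity :: "nat \<Rightarrow> (nat \<Rightarrow> 'f \<Rightarrow> 'f) \<Rightarrow> ('f located set \<Rightarrow> 'f located set \<Rightarrow> bool)
    \<Rightarrow> nat \<Rightarrow> bool" where
  "falsity n N D j \<longleftrightarrow>
     (\<forall>i \<phi> \<Gamma> \<Delta>. 1 \<le> i \<longrightarrow> i \<le> n \<longrightarrow> located_set n \<Gamma> \<longrightarrow> located_set n \<Delta> \<longrightarrow>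
        (D \<Gamma> (insert (N i \<phi>, j) \<Delta>) \<longleftrightarrow> D \<Gamma> (insert (\<phi>, i) \<Delta>)))"

end

theory Submission
  imports Defs
begin

text \<open>If v_j and v_k are distinct falsities, any located formula (\<psi>, i) can be deleted from a
succedent: by the falsity equivalences the sequent with (\<psi>, i) yields both the sequent with
(N_i \<psi>, j) and the one with (N_i \<psi>, k), and coordination on N_i \<psi> removes it. Deleting the
whole succedent of the excluded-middle sequent {} : {(\<phi>, 1), ..., (\<phi>, n)}, which follows
from an initial sequent by shifting right, then derives the empty sequent.\<close>

lemma located_set_empty [simp]: "located_set n {}"
  by (simp add: located_set_def)

lemma located_set_insert [simp]:
  "located_set n (insert p A) \<longleftrightarrow> 1 \<le> snd p \<and> snd p \<le> n \<and> located_set n A"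
  by (auto simp: located_set_def)

lemma structural_initial:
  assumes "structural n D" "located_set n \<Gamma>" "located_set n \<Delta>" "1 \<le> i" "i \<le> n"
  shows "D (insert (\<phi>, i) \<Gamma>) (insert (\<phi>, i) \<Delta>)"
  using assms unfolding structural_def by (elim conjE) (simp only: all_simps)

lemma structural_shift_right:
  assumes "structural n D" "located_set n \<Gamma>" "located_set n \<Delta>" "1 \<le> i" "i \<le> n"
    and "D (insert (\<phi>, i) \<Gamma>) \<Delta>"
  shows "D \<Gamma> (\<Delta> \<union> {(\<phi>, m) | m. 1 \<le> m \<and> m \<le> n \<and> m \<noteq> i})"
  using assms unfolding structural_def by (elim conjE) (simp only: all_simps)

lemma structural_coordination:
  assumes "structural n D" "located_set n \<Gamma>" "located_set n \<Delta>"
    and "1 \<le> i" "i \<le> n" "1 \<le> j" "j \<le> n" "i \<noteq> j"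
    and "D \<Gamma> (insert (\<phi>, i) \<Delta>)" "D \<Gamma> (insert (\<phi>, j) \<Delta>)"
  shows "D \<Gamma> \<Delta>"
  using assms unfolding structural_def by (elim conjE) (simp only: all_simps)

lemma excluded_middle_derivable:
  assumes S: "structural n D" and "1 \<le> n"
  shows "D {} {(\<phi>, m) | m. 1 \<le> m \<and> m \<le> n}"
proof -
  have "D {(\<phi>, 1)} {(\<phi>, 1)}"
    using structural_initial[OF S, of "{}" "{}" 1 \<phi>] \<open>1 \<le> n\<close> by simp
  then have "D {} ({(\<phi>, 1)} \<union> {(\<phi>, m) | m. 1 \<le> m \<and> m \<le> n \<and> m \<noteq> 1})"
    using structural_shift_right[OF S, of "{}" "{(\<phi>, 1)}" 1 \<phi>] \<open>1 \<le> n\<close> by simp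
  moreover have "{(\<phi>, 1)} \<union> {(\<phi>, m) | m. 1 \<le> m \<and> m \<le> n \<and> m \<noteq> 1} =
      {(\<phi>, m) | m. 1 \<le> m \<and> m \<le> n}"
    using \<open>1 \<le> n\<close> by auto
  ultimately show ?thesis by simp
qed

lemma located_set_excluded_middle: "located_set n {(\<phi>, m) | m. 1 \<le> m \<and> m \<le> n}"
proof -
  have "{(\<phi>, m) | m. 1 \<le> m \<and> m \<le> n} = (\<lambda>m. (\<phi>, m)) ` {1..n}" by auto
  then show ?thesis by (simp add: located_set_def)
qed

context
  fixes n :: nat and N :: "nat \<Rightarrow> 'f \<Rightarrow> 'f" and D :: "'f located set \<Rightarrow> 'f located set \<Rightarrow> bool"
    and j k :: nat
  assumes S: "structural n D"
    and j: "1 \<le> j" "j \<le> n" and k: "1 \<le> k" "k \<le> n" and "j \<noteq> k"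
    and falsity_j: "falsity n N D j" and falsity_k: "falsity n N D k"
begin

lemma distinct_falsities_delete_succedent:
  assumes \<Gamma>: "located_set n \<Gamma>" and \<Delta>: "located_set n \<Delta>" and i: "1 \<le> i" "i \<le> n"
    and "D \<Gamma> (insert (\<psi>, i) \<Delta>)"
  shows "D \<Gamma> \<Delta>"
proof -
  have "D \<Gamma> (insert (N i \<psi>, j) \<Delta>)"
    using falsity_j \<Gamma> \<Delta> i \<open>D \<Gamma> (insert (\<psi>, i) \<Delta>)\<close> unfolding falsity_def by blast
  moreover have "D \<Gamma> (insert (N i \<psi>, k) \<Delta>)"
    using falsity_k \<Gamma> \<Delta> i \<open>D \<Gamma> (insert (\<psi>, i) \<Delta>)\<close> unfolding falsity_def by blast
  ultimately show ?thesis
    using structural_coordination[OF S \<Gamma> \<Delta> j k \<open>j \<noteq> k\<close>] by blast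
qed

lemma distinct_falsities_empty_succedent:
  assumes \<Gamma>: "located_set n \<Gamma>" and "located_set n \<Delta>" and "D \<Gamma> \<Delta>"
  shows "D \<Gamma> {}"
proof -
  have "finite \<Delta>" using \<open>located_set n \<Delta>\<close> by (simp add: located_set_def)
  then show ?thesis using assms(2,3)
  proof (induction \<Delta> rule: finite_induct)
    case (insert p \<Delta>)
    then show ?case
      using distinct_falsities_delete_succedent[OF \<Gamma>, of \<Delta> "snd p" "fst p"] by simp
  qed
qed

end

theorem mainTheorem2:
  fixes n :: nat and N :: "nat \<Rightarrow> 'f \<Rightarrow> 'f"
    and D :: "'f located set \<Rightarrow> 'f located set \<Rightarrow> bool"
  assumes "n \<ge> 2"
    and "structural n D"
    and "\<not> D {} {}"
    and "1 \<le> j" "j \<le> n" "1 \<le> k" "k \<le> n"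
    and "falsity n N D j" and "falsity n N D k"
  shows "j = k"
proof (rule ccontr)
  assume "j \<noteq> k"
  fix \<phi> :: 'f
  have "D {} {(\<phi>, m) | m. 1 \<le> m \<and> m \<le> n}"
    using excluded_middle_derivable[OF \<open>structural n D\<close>] \<open>n \<ge> 2\<close> by simp
  then have "D {} {}"
    using distinct_falsities_empty_succedent[OF assms(2,4-7) \<open>j \<noteq> k\<close> assms(8,9)]
      located_set_excluded_middle[of n \<phi>] by simp
  with \<open>\<not> D {} {}\<close> show False ..
qed

end
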